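(* Let $\Delta=\delta_x\times\delta_y$ with $x_k=y_k=k/10$, $k=0,\dots,10$, and define $\langle A\rangle,\langle B\rangle:\Delta\to\mathbb{R}$ by $\langle A\rangle(j/10,k/10)=[A]_{j+1,k+1}$, $\langle B\rangle(j/10,k/10)=[B]_{j+1,k+1}$ ($j,k=0,\dots,10$), where $$[A]=\tfrac{1}{50}\begin{bmatrix} 0&0&0&0&0&0&0&0&0&0&0\\ 0&0&1&2&3&4&5&5&5&5&5\\ 0&1&2&3&3&4&5&10&10&10&10\\ 0&2&2&5&7&7&8&13&15&15&15\\ 0&3&3&6&7&7&8&13&18&20&20\\ 0&4&4&6&9&11&11&16&21&25&25\\ 0&5&5&7&9&11&11&16&21&26&30\\ 0&5&10&12&14&16&16&21&26&31&35\\ 0&5&10&15&19&21&21&26&31&36&40\\ 0&5&10&15&20&25&26&31&36&41&45\\ 0&5&10&15&20&25&30&35&40&45&50 \end{bmatrix},\quad [B]=\tfrac{1}{50}\begin{bmatrix} 0&0&0&0&0&0&0&0&0&0&0\\ 0&1&2&3&4&5&5&5&5&5&5\\ 0&2&2&3&4&5&6&10&10&10&10\\ 0&3&3&6&7&8&9&14&15&15&15\\ 0&4&4&6&8&8&9&14&18&20&20\\ 0&5&5&7&9&11&12&17&22&25&25\\ 0&5&6&8&10&12&12&17&22&26&30\\ 0&5&10&13&15&17&17&22&27&31&35\\ 0&5&10&15&19&21&22&27&32&36&40\\ 0&5&10&15&20&25&26&31&36&41&45\\ 0&5&10&15&20&25&30&35&40&45&50 \end{bmatrix}.$$ Then $\langle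 A\rangle$ is a discrete quasi-copula, $\langle B\rangle=\langle A\rangle_M$, $(\langle A\rangle,\langle B\rangle)$ is a discrete imprecise copula, and there is no discrete copula $C$ on $\Delta$ with $\langle A\rangle\le C\le\langle B\rangle$. Consequently $(\langle A\rangle^{\mathrm{BL}},\langle B\rangle^{\mathrm{BL}})$ is an imprecise copula on $[0,1]^2$ for which no copula $C$ satisfies $\langle A\rangle^{\mathrm{BL}}\le C\le\langle B\rangle^{\mathrm{BL}}$.
   Context: All points and rectangle corners are in the mesh $\Delta$ unless stated otherwise. For $Q:\Delta\to\mathbb{R}$, $V_Q([s_1,s_2]\times[t_1,t_2])=Q(s_1,t_1)+Q(s_2,t_2)-Q(s_2,t_1)-Q(s_1,t_2)$. Discrete copula: grounded ($Q(x,0)=Q(0,y)=0$), neutral element 1 ($Q(x,1)=x$, $Q(1,y)=y$), $V_Q\ge0$ on all rectangles with corners in $\Delta$; discrete quasi-copula: grounded, neutral element 1, $V_Q\ge0$ on rectangles with corners in $\Delta$ having a side on the boundary of $[0,1]^2$. Defects: for $\mathbf{x}\in\Delta$, $D^Q_\nearrow(\mathbf{x})$, $D^Q_\swarrow(\mathbf{x})$ are the minima of $V_Q(R)$ over (possibly degenerate) rectangles with corners in $\Delta$ having $\mathbf{x}$ as southwest, respectively northeast, corner; $D^Q_M=\min(D^Q_\nearrow,D^Q_\swarrow)$ and $Q_M=Q-D^Q_M$. Discrete imprecise copula: pair $(A,B)$ on $\Delta$, both grounded with neutral element 1, such that for every rectangle with corners in $\Delta$ and SW, SE, NE, NW corners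 $\mathbf{a},\mathbf{b},\mathbf{c},\mathbf{d}$: $A(\mathbf{a})+B(\mathbf{c})-A(\mathbf{b})-A(\mathbf{d})\ge0$, $B(\mathbf{a})+A(\mathbf{c})-A(\mathbf{b})-A(\mathbf{d})\ge0$, $B(\mathbf{a})+B(\mathbf{c})-B(\mathbf{b})-A(\mathbf{d})\ge0$, $B(\mathbf{a})+B(\mathbf{c})-A(\mathbf{b})-B(\mathbf{d})\ge0$; the imprecise copula on $[0,1]^2$ is defined identically with points in $[0,1]^2$. Copula on $[0,1]^2$: grounded, neutral element 1, $V_C\ge0$ on all rectangles. $Q^{\mathrm{BL}}$ is the function on $[0,1]^2$ equal on each cell $[\frac{i-1}{10},\frac{i}{10}]\times[\frac{j-1}{10},\frac{j}{10}]$ to the bilinear interpolation (affine in each variable separately) of the corner values of $Q$. *)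

theory Defs
  imports Complex_Main
begin

definition mesh :: "real set" where
  "mesh = {real k / 10 | k. k \<le> 10}"

text \<open>Functions on Delta are represented as functions real => real => real;
only their values at points of mesh \<times> mesh matter.\<close>

definition Vol :: "(real \<Rightarrow> real \<Rightarrow> real) \<Rightarrow> real \<Rightarrow> real \<Rightarrow> real \<Rightarrow> real \<Rightarrow> real" where
  "Vol Q s1 s2 t1 t2 = Q s1 t1 + Q s2 t2 - Q s2 t1 - Q s1 t2"

definition disc_grounded :: "(real \<Rightarrow> real \<Rightarrow> real) \<Rightarrow> bool" where
  "disc_grounded Q \<longleftrightarrow> (\<forall>x\<in>mesh. Q x 0 = 0 \<and> Q 0 x = 0)"

definition disc_neutral :: "(real \<Rightarrow> real \<Rightarrow> real) \<Rightarrow> bool" where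
  "disc_neutral Q \<longleftrightarrow> (\<forall>x\<in>mesh. Q x 1 = x \<and> Q 1 x = x)"

definition disc_copula :: "(real \<Rightarrow> real \<Rightarrow> real) \<Rightarrow> bool" where
  "disc_copula Q \<longleftrightarrow> disc_grounded Q \<and> disc_neutral Q \<and>
     (\<forall>s1\<in>mesh. \<forall>s2\<in>mesh. \<forall>t1\<in>mesh. \<forall>t2\<in>mesh.
        s1 \<le> s2 \<longrightarrow> t1 \<le> t2 \<longrightarrow> Vol Q s1 s2 t1 t2 \<ge> 0)"

definition disc_quasi_copula :: "(real \<Rightarrow> real \<Rightarrow> real) \<Rightarrow> bool" where
  "disc_quasi_copula Q \<longleftrightarrow> disc_grounded Q \<and> disc_neutral Q \<and>
     (\<forall>s1\<in>mesh. \<forall>s2\<in>mesh. \<forall>t1\<in>mesh. \<forall>t2\<in>mesh.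
        s1 \<le> s2 \<longrightarrow> t1 \<le> t2 \<longrightarrow> (s1 = 0 \<or> s2 = 1 \<or> t1 = 0 \<or> t2 = 1) \<longrightarrow>
        Vol Q s1 s2 t1 t2 \<ge> 0)"

text \<open>Defects: minima of V_Q over (possibly degenerate) mesh rectangles having (a,b)
  as southwest, resp. northeast, corner.\<close>

definition defect_NE :: "(real \<Rightarrow> real \<Rightarrow> real) \<Rightarrow> real \<Rightarrow> real \<Rightarrow> real" where
  "defect_NE Q a b = Min {Vol Q a s2 b t2 | s2 t2. s2 \<in> mesh \<and> t2 \<in> mesh \<and> a \<le> s2 \<and> b \<le> t2}"

definition defect_SW :: "(real \<Rightarrow> real \<Rightarrow> real) \<Rightarrow> real \<Rightarrow> real \<Rightarrow> real" where
  "defect_SW Q a b = Min {Vol Q s1 a t1 b | s1 t1. s1 \<in> mesh \<and> t1 \<in> mesh \<and> s1 \<le> a \<and> t1 \<le> b}"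

definition defect_M :: "(real \<Rightarrow> real \<Rightarrow> real) \<Rightarrow> real \<Rightarrow> real \<Rightarrow> real" where
  "defect_M Q a b = min (defect_NE Q a b) (defect_SW Q a b)"

definition Q_M :: "(real \<Rightarrow> real \<Rightarrow> real) \<Rightarrow> real \<Rightarrow> real \<Rightarrow> real" where
  "Q_M Q a b = Q a b - defect_M Q a b"

text \<open>Imprecise copula conditions; SW, SE, NE, NW corners of [s1,s2] x [t1,t2] are
  (s1,t1), (s2,t1), (s2,t2), (s1,t2).\<close>

definition imprecise_ineqs :: "(real \<Rightarrow> real \<Rightarrow> real) \<Rightarrow> (real \<Rightarrow> real \<Rightarrow> real) \<Rightarrow> real \<Rightarrow> real \<Rightarrow> real \<Rightarrow> real \<Rightarrow> bool" where
  "imprecise_ineqs A B s1 s2 t1 t2 \<longleftrightarrow>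
     A s1 t1 + B s2 t2 - A s2 t1 - A s1 t2 \<ge> 0 \<and>
     B s1 t1 + A s2 t2 - A s2 t1 - A s1 t2 \<ge> 0 \<and>
     B s1 t1 + B s2 t2 - B s2 t1 - A s1 t2 \<ge> 0 \<and>
     B s1 t1 + B s2 t2 - A s2 t1 - B s1 t2 \<ge> 0"

definition disc_imprecise_copula :: "(real \<Rightarrow> real \<Rightarrow> real) \<Rightarrow> (real \<Rightarrow> real \<Rightarrow> real) \<Rightarrow> bool" where
  "disc_imprecise_copula A B \<longleftrightarrow>
     disc_grounded A \<and> disc_neutral A \<and> disc_grounded B \<and> disc_neutral B \<and>
     (\<forall>s1\<in>mesh. \<forall>s2\<in>mesh. \<forall>t1\<in>mesh. \<forall>t2\<in>mesh.
        s1 \<le> s2 \<longrightarrow> t1 \<le> t2 \<longrightarrow> imprecise_ineqs A B s1 s2 t1 t2)"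

definition grounded :: "(real \<Rightarrow> real \<Rightarrow> real) \<Rightarrow> bool" where
  "grounded Q \<longleftrightarrow> (\<forall>x\<in>{0..1}. Q x 0 = 0 \<and> Q 0 x = 0)"

definition neutral :: "(real \<Rightarrow> real \<Rightarrow> real) \<Rightarrow> bool" where
  "neutral Q \<longleftrightarrow> (\<forall>x\<in>{0..1}. Q x 1 = x \<and> Q 1 x = x)"

definition copula :: "(real \<Rightarrow> real \<Rightarrow> real) \<Rightarrow> bool" where
  "copula C \<longleftrightarrow> grounded C \<and> neutral C \<and>
     (\<forall>s1\<in>{0..1}. \<forall>s2\<in>{0..1}. \<forall>t1\<in>{0..1}. \<forall>t2\<in>{0..1}.
        s1 \<le> s2 \<longrightarrow> t1 \<le> t2 \<longrightarrow> Vol C s1 s2 t1 t2 \<ge> 0)"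

definition imprecise_copula :: "(real \<Rightarrow> real \<Rightarrow> real) \<Rightarrow> (real \<Rightarrow> real \<Rightarrow> real) \<Rightarrow> bool" where
  "imprecise_copula A B \<longleftrightarrow>
     grounded A \<and> neutral A \<and> grounded B \<and> neutral B \<and>
     (\<forall>s1\<in>{0..1}. \<forall>s2\<in>{0..1}. \<forall>t1\<in>{0..1}. \<forall>t2\<in>{0..1}.
        s1 \<le> s2 \<longrightarrow> t1 \<le> t2 \<longrightarrow> imprecise_ineqs A B s1 s2 t1 t2)"

text \<open>For x in [0,1], the cell index i (0..9) with x in [i/10,(i+1)/10]
  (at shared cell boundaries any choice gives the same value).\<close>

definition cell :: "real \<Rightarrow> nat" where
  "cell x = min (nat \<lfloor>10 * x\<rfloor>) 9"

definition BL :: "(real \<Rightarrow> real \<Rightarrow> real) \<Rightarrow> real \<Rightarrow> real \<Rightarrow> real" where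
  "BL Q x y =
     (let i = cell x; j = cell y;
          u = 10 * x - real i; v = 10 * y - real j;
          x0 = real i / 10; x1 = real (i + 1) / 10;
          y0 = real j / 10; y1 = real (j + 1) / 10
      in (1 - u) * (1 - v) * Q x0 y0 + u * (1 - v) * Q x1 y0
         + (1 - u) * v * Q x0 y1 + u * v * Q x1 y1)"

definition matA :: "int list list" where
  "matA =
   [[0,0,0,0,0,0,0,0,0,0,0],
    [0,0,1,2,3,4,5,5,5,5,5],
    [0,1,2,3,3,4,5,10,10,10,10],
    [0,2,2,5,7,7,8,13,15,15,15],
    [0,3,3,6,7,7,8,13,18,20,20],
    [0,4,4,6,9,11,11,16,21,25,25],
    [0,5,5,7,9,11,11,16,21,26,30],
    [0,5,10,12,14,16,16,21,26,31,35],
    [0,5,10,15,19,21,21,26,31,36,40],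
    [0,5,10,15,20,25,26,31,36,41,45],
    [0,5,10,15,20,25,30,35,40,45,50]]"

definition matB :: "int list list" where
  "matB =
   [[0,0,0,0,0,0,0,0,0,0,0],
    [0,1,2,3,4,5,5,5,5,5,5],
    [0,2,2,3,4,5,6,10,10,10,10],
    [0,3,3,6,7,8,9,14,15,15,15],
    [0,4,4,6,8,8,9,14,18,20,20],
    [0,5,5,7,9,11,12,17,22,25,25],
    [0,5,6,8,10,12,12,17,22,26,30],
    [0,5,10,13,15,17,17,22,27,31,35],
    [0,5,10,15,19,21,22,27,32,36,40],
    [0,5,10,15,20,25,26,31,36,41,45],
    [0,5,10,15,20,25,30,35,40,45,50]]"

text \<open><M>(j/10, k/10) = [M]_{j+1,k+1} / 50 (0-based list indices j, k).\<close>

definition mesh_fun :: "int list list \<Rightarrow> real \<Rightarrow> real \<Rightarrow> real" where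
  "mesh_fun M x y = real_of_int (M ! nat (round (10 * x)) ! nat (round (10 * y))) / 50"

definition A_mesh :: "real \<Rightarrow> real \<Rightarrow> real" where "A_mesh = mesh_fun matA"
definition B_mesh :: "real \<Rightarrow> real \<Rightarrow> real" where "B_mesh = mesh_fun matB"

end

theory Submission
  imports Defs
begin

text \<open>
  The discrete claims are finite checks on the integer matrices \<open>50\<langle>A\<rangle>\<close> and \<open>50\<langle>B\<rangle>\<close>,
  carried out by evaluation. No copula \<open>C\<close> can lie between \<open>\<langle>A\<rangle>\<close> and \<open>\<langle>B\<rangle>\<close> on the mesh:
  the \<open>C\<close>-volume of \<open>[1/10,6/10]\<^sup>2\<close> with the rectangles \<open>[2/10,3/10] \<times> [2/10,4/10]\<close> and
  \<open>[4/10,5/10] \<times> [3/10,5/10]\<close> removed is nonnegative, yet it is a signed sum of twelve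
  values of \<open>C\<close> whose bounds by \<open>\<langle>A\<rangle>\<close> and \<open>\<langle>B\<rangle>\<close> add up to \<open>-1/50\<close>. The bilinear
  extensions agree with \<open>\<langle>A\<rangle>\<close>, \<open>\<langle>B\<rangle>\<close> on the mesh, so the same points exclude a copula
  between them. Bilinear interpolants are affine in each variable on every cell, and for
  fixed \<open>t\<^sub>1, t\<^sub>2\<close> each imprecise-copula expression is a function of \<open>s\<^sub>1\<close> plus a function
  of \<open>s\<^sub>2\<close> (and symmetrically). Hence it suffices to check it at mesh points and on the
  diagonals \<open>s\<^sub>1 = s\<^sub>2\<close>, \<open>t\<^sub>1 = t\<^sub>2\<close>, where it reduces to \<open>\<langle>A\<rangle>\<^sup>B\<^sup>L \<le> \<langle>B\<rangle>\<^sup>B\<^sup>L\<close>.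
\<close>

section \<open>Functions on the mesh given by integer matrices\<close>

abbreviation grid :: "nat \<Rightarrow> real" where
  "grid k \<equiv> real k / 10"

lemma ball_mesh: "(\<forall>x\<in>mesh. P x) \<longleftrightarrow> (\<forall>k\<le>10. P (grid k))"
  unfolding mesh_def by blast

lemma grid_in_mesh: "k \<le> 10 \<Longrightarrow> grid k \<in> mesh"
  unfolding mesh_def by blast

lemma Collect_mesh_pairs:
  "{f s t | s t. s \<in> mesh \<and> t \<in> mesh \<and> P s t}
     = (\<lambda>(m, n). f (grid m) (grid n)) ` {(m, n). m \<le> 10 \<and> n \<le> 10 \<and> P (grid m) (grid n)}"
  unfolding mesh_def by fast

lemma mesh_fun_grid: "mesh_fun M (grid k) (grid l) = real_of_int (M ! k ! l) / 50"
  by (simp add: mesh_fun_def)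

definition mixed_vol :: "int list list \<Rightarrow> int list list \<Rightarrow> int list list \<Rightarrow> int list list \<Rightarrow> nat \<Rightarrow> nat \<Rightarrow> nat \<Rightarrow> nat \<Rightarrow> int" where
  "mixed_vol F G H K a b c d = F ! a ! c + G ! b ! d - H ! b ! c - K ! a ! d"

abbreviation int_vol :: "int list list \<Rightarrow> nat \<Rightarrow> nat \<Rightarrow> nat \<Rightarrow> nat \<Rightarrow> int" where
  "int_vol M \<equiv> mixed_vol M M M M"

lemma mixed_vol_mesh_fun:
  "real_of_int (mixed_vol F G H K a b c d) / 50
     = mesh_fun F (grid a) (grid c) + mesh_fun G (grid b) (grid d) - mesh_fun H (grid b) (grid c) - mesh_fun K (grid a) (grid d)"
  by (simp add: mixed_vol_def mesh_fun_grid diff_divide_distrib add_divide_distrib)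

lemma Vol_mesh_fun_grid:
  "Vol (mesh_fun M) (grid a) (grid b) (grid c) (grid d) = real_of_int (int_vol M a b c d) / 50"
  by (simp add: Vol_def mixed_vol_mesh_fun)

text \<open>Bounded quantifiers range over lists so that \<open>code_simp\<close> can decide the concrete instances.\<close>

definition int_margins :: "int list list \<Rightarrow> bool" where
  "int_margins M \<longleftrightarrow>
     (\<forall>k\<in>set [0..<11]. M ! k ! 0 = 0 \<and> M ! 0 ! k = 0 \<and> M ! k ! 10 = 5 * int k \<and> M ! 10 ! k = 5 * int k)"

lemma
  assumes "int_margins M"
  shows disc_grounded_mesh_fun: "disc_grounded (mesh_fun M)"
    and disc_neutral_mesh_fun: "disc_neutral (mesh_fun M)"
  using assms unfolding int_margins_def disc_grounded_def disc_neutral_def ball_mesh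
  by (auto simp: mesh_fun_def)

definition int_quasi_copula :: "int list list \<Rightarrow> bool" where
  "int_quasi_copula M \<longleftrightarrow>
     (\<forall>a\<in>set [0..<11]. \<forall>b\<in>set [a..<11]. \<forall>c\<in>set [0..<11]. \<forall>d\<in>set [c..<11].
        (a = 0 \<or> b = 10 \<or> c = 0 \<or> d = 10) \<longrightarrow> 0 \<le> int_vol M a b c d)"

lemma disc_quasi_copula_mesh_fun:
  assumes "int_margins M" "int_quasi_copula M"
  shows "disc_quasi_copula (mesh_fun M)"
proof -
  have "0 \<le> int_vol M a b c d"
    if "a \<le> b" "b \<le> 10" "c \<le> d" "d \<le> 10" "a = 0 \<or> b = 10 \<or> c = 0 \<or> d = 10" for a b c d
  proof -
    have "a \<in> set [0..<11]" "b \<in> set [a..<11]" "c \<in> set [0..<11]" "d \<in> set [c..<11]"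
      using that by auto
    then show ?thesis
      using assms(2) that(5) unfolding int_quasi_copula_def by blast
  qed
  then show ?thesis
    unfolding disc_quasi_copula_def ball_mesh
    by (auto simp: disc_grounded_mesh_fun[OF assms(1)] disc_neutral_mesh_fun[OF assms(1)]
        Vol_mesh_fun_grid)
qed

definition int_imprecise_copula :: "int list list \<Rightarrow> int list list \<Rightarrow> bool" where
  "int_imprecise_copula M N \<longleftrightarrow>
     (\<forall>a\<in>set [0..<11]. \<forall>b\<in>set [a..<11]. \<forall>c\<in>set [0..<11]. \<forall>d\<in>set [c..<11].
        0 \<le> mixed_vol M N M M a b c d \<and> 0 \<le> mixed_vol N M M M a b c d \<and>
        0 \<le> mixed_vol N N N M a b c d \<and> 0 \<le> mixed_vol N N M N a b c d)"

lemma disc_imprecise_copula_mesh_fun: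
  assumes "int_margins M" "int_margins N" "int_imprecise_copula M N"
  shows "disc_imprecise_copula (mesh_fun M) (mesh_fun N)"
  using assms(3)
  unfolding disc_imprecise_copula_def int_imprecise_copula_def imprecise_ineqs_def ball_mesh
  by (auto simp: assms disc_grounded_mesh_fun disc_neutral_mesh_fun
      mixed_vol_mesh_fun[symmetric])

definition int_defect_NE :: "int list list \<Rightarrow> nat \<Rightarrow> nat \<Rightarrow> int" where
  "int_defect_NE M k l = Min (set [int_vol M k m l n. m \<leftarrow> [k..<11], n \<leftarrow> [l..<11]])"

definition int_defect_SW :: "int list list \<Rightarrow> nat \<Rightarrow> nat \<Rightarrow> int" where
  "int_defect_SW M k l = Min (set [int_vol M m k n l. m \<leftarrow> [0..<k+1], n \<leftarrow> [0..<l+1]])"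

lemma Min_div_50:
  assumes "finite S" "S \<noteq> {}"
  shows "Min ((\<lambda>z. real_of_int z / 50) ` S) = real_of_int (Min S) / 50"
  using assms by (intro mono_Min_commute[symmetric] monoI) auto

lemma defect_NE_mesh_fun:
  assumes "k \<le> 10" "l \<le> 10"
  shows "defect_NE (mesh_fun M) (grid k) (grid l) = real_of_int (int_defect_NE M k l) / 50"
proof -
  have "{Vol (mesh_fun M) (grid k) s2 (grid l) t2 | s2 t2. s2 \<in> mesh \<and> t2 \<in> mesh \<and> grid k \<le> s2 \<and> grid l \<le> t2}
      = (\<lambda>z. real_of_int z / 50) ` set [int_vol M k m l n. m \<leftarrow> [k..<11], n \<leftarrow> [l..<11]]"
    unfolding Collect_mesh_pairs by (force simp: Vol_mesh_fun_grid)
  then show ?thesis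
    unfolding defect_NE_def int_defect_NE_def by (rule ssubst, intro Min_div_50) (use assms in auto)
qed

lemma defect_SW_mesh_fun:
  assumes "k \<le> 10" "l \<le> 10"
  shows "defect_SW (mesh_fun M) (grid k) (grid l) = real_of_int (int_defect_SW M k l) / 50"
proof -
  have "{Vol (mesh_fun M) s1 (grid k) t1 (grid l) | s1 t1. s1 \<in> mesh \<and> t1 \<in> mesh \<and> s1 \<le> grid k \<and> t1 \<le> grid l}
      = (\<lambda>z. real_of_int z / 50) ` set [int_vol M m k n l. m \<leftarrow> [0..<k+1], n \<leftarrow> [0..<l+1]]"
    unfolding Collect_mesh_pairs using assms by (force simp: Vol_mesh_fun_grid simp del: upt_Suc)
  then show ?thesis
    unfolding defect_SW_def int_defect_SW_def by (rule ssubst, intro Min_div_50) (auto simp del: upt_Suc)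
qed

definition int_Q_M :: "int list list \<Rightarrow> nat \<Rightarrow> nat \<Rightarrow> int" where
  "int_Q_M M k l = M ! k ! l - min (int_defect_NE M k l) (int_defect_SW M k l)"

lemma Q_M_mesh_fun:
  assumes "k \<le> 10" "l \<le> 10"
  shows "Q_M (mesh_fun M) (grid k) (grid l) = real_of_int (int_Q_M M k l) / 50"
  unfolding Q_M_def defect_M_def int_Q_M_def
    defect_NE_mesh_fun[OF assms] defect_SW_mesh_fun[OF assms] mesh_fun_grid
  by (simp add: min_def diff_divide_distrib)

section \<open>Bilinear interpolation\<close>

lemma cell_le_9: "cell x \<le> 9"
  unfolding cell_def by simp

lemma cell_grid: "k \<le> 10 \<Longrightarrow> cell (grid k) = min k 9"
  unfolding cell_def by simp

lemma cell_bounds: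
  assumes "0 \<le> x" "x \<le> 1"
  shows "grid (cell x) \<le> x" "x \<le> grid (cell x + 1)"
proof -
  have "real (cell x) \<le> 10 * x \<and> 10 * x \<le> real (cell x) + 1"
  proof (cases "\<lfloor>10 * x\<rfloor> \<le> 9")
    case True
    moreover have "0 \<le> \<lfloor>10 * x\<rfloor>"
      using assms by simp
    ultimately have "real (cell x) = of_int \<lfloor>10 * x\<rfloor>"
      unfolding cell_def by (simp add: nat_le_iff)
    then show ?thesis by linarith
  next
    case False
    then show ?thesis
      using assms unfolding cell_def by simp
  qed
  then show "grid (cell x) \<le> x" "x \<le> grid (cell x + 1)"
    by simp_all
qed

lemma cell_eq_or_right_end:
  assumes "k < 10" "grid k \<le> x" "x \<le> grid (k + 1)"
  shows "cell x = k \<or> (cell x = k + 1 \<and> x = grid (k + 1))"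
proof -
  have "\<lfloor>10 * x\<rfloor> = int k \<or> (\<lfloor>10 * x\<rfloor> = int k + 1 \<and> 10 * x = real k + 1)"
    using assms by simp linarith
  then show ?thesis
    using assms unfolding cell_def by (auto simp: nat_add_distrib)
qed

definition interp :: "(real \<Rightarrow> real) \<Rightarrow> real \<Rightarrow> real" where
  "interp h x = (1 - (10 * x - real (cell x))) * h (grid (cell x))
                + (10 * x - real (cell x)) * h (grid (cell x + 1))"

lemma BL_interp_outer_x: "BL Q x y = interp (\<lambda>s. interp (\<lambda>t. Q s t) y) x"
  unfolding BL_def interp_def Let_def by (simp add: algebra_simps)

lemma BL_interp_outer_y: "BL Q x y = interp (\<lambda>t. interp (\<lambda>s. Q s t) x) y"
  unfolding BL_def interp_def Let_def by (simp add: algebra_simps)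

lemma interp_grid: "k \<le> 10 \<Longrightarrow> interp h (grid k) = h (grid k)"
  by (cases "k = 10") (simp_all add: interp_def cell_grid cell_grid[of 10, simplified])

lemma interp_mono:
  assumes "\<And>k. k \<le> 10 \<Longrightarrow> h (grid k) \<le> h' (grid k)" "0 \<le> x" "x \<le> 1"
  shows "interp h x \<le> interp h' x"
proof -
  have "0 \<le> 10 * x - real (cell x)" "0 \<le> 1 - (10 * x - real (cell x))"
    using cell_bounds[OF assms(2,3)] by simp_all
  moreover have "h (grid (cell x)) \<le> h' (grid (cell x))" "h (grid (cell x + 1)) \<le> h' (grid (cell x + 1))"
    using cell_le_9[of x] by (intro assms(1); simp)+
  ultimately show ?thesis
    unfolding interp_def by (intro add_mono mult_left_mono)
qed

lemma interp_grid_values: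
  assumes "\<And>k. k \<le> 10 \<Longrightarrow> h (grid k) = c + d * grid k"
  shows "interp h x = c + d * x"
proof -
  have "h (grid (cell x)) = c + d * grid (cell x)" "h (grid (cell x + 1)) = c + d * grid (cell x + 1)"
    using cell_le_9[of x] by (intro assms; simp)+
  then show ?thesis
    unfolding interp_def by (simp only:) (simp add: field_simps)
qed

lemma BL_grid: "k \<le> 10 \<Longrightarrow> l \<le> 10 \<Longrightarrow> BL Q (grid k) (grid l) = Q (grid k) (grid l)"
  by (simp add: BL_interp_outer_x interp_grid)

lemma BL_mono:
  assumes "\<And>k l. k \<le> 10 \<Longrightarrow> l \<le> 10 \<Longrightarrow> Q (grid k) (grid l) \<le> R (grid k) (grid l)"
    and "0 \<le> x" "x \<le> 1" "0 \<le> y" "y \<le> 1"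
  shows "BL Q x y \<le> BL R x y"
  unfolding BL_interp_outer_x using assms by (intro interp_mono) simp_all

lemma grounded_BL:
  assumes "disc_grounded Q"
  shows "grounded (BL Q)"
proof -
  have "Q (grid k) 0 = 0" "Q 0 (grid k) = 0" if "k \<le> 10" for k
    using assms grid_in_mesh[OF that] unfolding disc_grounded_def by simp_all
  then show ?thesis
    unfolding grounded_def
    using interp_grid[of 0] interp_grid_values[where c = 0 and d = 0]
    by (simp add: BL_interp_outer_x[of Q 0] BL_interp_outer_y[of Q _ 0])
qed

lemma neutral_BL:
  assumes "disc_neutral Q"
  shows "neutral (BL Q)"
proof -
  have "Q (grid k) 1 = grid k" "Q 1 (grid k) = grid k" if "k \<le> 10" for k
    using assms grid_in_mesh[OF that] unfolding disc_neutral_def by simp_all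
  then show ?thesis
    unfolding neutral_def
    using interp_grid[of 10] interp_grid_values[where c = 0 and d = 1]
    by (simp add: BL_interp_outer_x[of Q 1] BL_interp_outer_y[of Q _ 1])
qed

definition grid_affine :: "(real \<Rightarrow> real) \<Rightarrow> bool" where
  "grid_affine g \<longleftrightarrow> (\<forall>k<10. \<forall>x. grid k \<le> x \<and> x \<le> grid (k + 1) \<longrightarrow>
      g x = (1 - (10 * x - real k)) * g (grid k) + (10 * x - real k) * g (grid (k + 1)))"

lemma grid_affine_interp: "grid_affine (interp h)"
  unfolding grid_affine_def
proof (intro allI impI)
  fix k x
  assume k: "k < 10" and x_in_cell: "grid k \<le> x \<and> x \<le> grid (k + 1)"
  have ends: "interp h (grid k) = h (grid k)" "interp h (grid (k + 1)) = h (grid (k + 1))"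
    using k by (intro interp_grid; simp)+
  have "cell x = k \<or> (cell x = k + 1 \<and> x = grid (k + 1))"
    using cell_eq_or_right_end[OF k] x_in_cell by blast
  then show "interp h x = (1 - (10 * x - real k)) * interp h (grid k) + (10 * x - real k) * interp h (grid (k + 1))"
  proof
    assume "cell x = k"
    then show ?thesis
      unfolding ends by (simp add: interp_def)
  next
    assume "cell x = k + 1 \<and> x = grid (k + 1)"
    then have x_right_end: "cell x = k + 1" "10 * x = real k + 1"
      by simp_all
    then have "interp h x = h (grid (k + 1))"
      unfolding interp_def by simp
    also have "\<dots> = (1 - (10 * x - real k)) * h (grid k) + (10 * x - real k) * h (grid (k + 1))"
      using x_right_end(2) by simp
    finally show ?thesis
      unfolding ends .
  qed
qed

lemma grid_affine_const: "grid_affine (\<lambda>x. c)"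
  unfolding grid_affine_def by (simp add: algebra_simps)

lemma grid_affine_lincomb:
  assumes "grid_affine f" "grid_affine g"
  shows "grid_affine (\<lambda>x. f x + c * g x)"
  unfolding grid_affine_def
proof (intro allI impI)
  fix k x
  assume "k < 10" "grid k \<le> x \<and> x \<le> grid (k + 1)"
  then have fx: "f x = (1 - (10 * x - real k)) * f (grid k) + (10 * x - real k) * f (grid (k + 1))"
    and gx: "g x = (1 - (10 * x - real k)) * g (grid k) + (10 * x - real k) * g (grid (k + 1))"
    using assms unfolding grid_affine_def by blast+
  show "f x + c * g x = (1 - (10 * x - real k)) * (f (grid k) + c * g (grid k))
      + (10 * x - real k) * (f (grid (k + 1)) + c * g (grid (k + 1)))"
    unfolding fx gx by (simp add: algebra_simps)
qed

lemma grid_affine_add: "grid_affine f \<Longrightarrow> grid_affine g \<Longrightarrow> grid_affine (\<lambda>x. f x + g x)"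
  using grid_affine_lincomb[of f g 1] by simp

lemma grid_affine_diff: "grid_affine f \<Longrightarrow> grid_affine g \<Longrightarrow> grid_affine (\<lambda>x. f x - g x)"
  using grid_affine_lincomb[of f g "-1"] by simp

lemma affine_nonneg_between:
  fixes p q x :: real
  assumes "0 \<le> p + q * lo" "0 \<le> p + q * hi" "lo \<le> x" "x \<le> hi"
  shows "0 \<le> p + q * x"
proof (cases "0 \<le> q")
  case True
  with assms(3) have "q * lo \<le> q * x" by (rule mult_left_mono)
  then show ?thesis using assms(1) by linarith
next
  case False
  then have "q * hi \<le> q * x" using assms(4) by (simp add: mult_left_mono_neg)
  then show ?thesis using assms(2) by linarith
qed

lemma grid_affine_nonneg_between:
  assumes g: "grid_affine g" and "0 \<le> a" "a \<le> x" "x \<le> b" "b \<le> 1" "0 \<le> g a" "0 \<le> g b"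
    and at_grid: "\<And>k. k \<le> 10 \<Longrightarrow> a \<le> grid k \<Longrightarrow> grid k \<le> b \<Longrightarrow> 0 \<le> g (grid k)"
  shows "0 \<le> g x"
proof -
  define k where "k = cell x"
  have k: "k < 10" "grid k \<le> x" "x \<le> grid (k + 1)"
    using cell_le_9[of x] cell_bounds[of x] assms(2-5) unfolding k_def by auto
  define lo where "lo = max a (grid k)"
  define hi where "hi = min b (grid (k + 1))"
  have in_cell: "grid k \<le> lo" "lo \<le> x" "x \<le> hi" "hi \<le> grid (k + 1)"
    unfolding lo_def hi_def using assms(3,4) k by (auto simp: min_def max_def)
  have lo_nonneg: "0 \<le> g lo"
  proof (cases "a \<le> grid k")
    case True
    then have "lo = grid k"
      unfolding lo_def by simp
    moreover have "0 \<le> g (grid k)"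
      by (rule at_grid) (use True k assms(3,4) in auto)
    ultimately show ?thesis by (simp only:)
  qed (use assms(6) in \<open>simp add: lo_def\<close>)
  have hi_nonneg: "0 \<le> g hi"
  proof (cases "grid (k + 1) \<le> b")
    case True
    then have "hi = grid (k + 1)"
      unfolding hi_def by simp
    moreover have "0 \<le> g (grid (k + 1))"
      by (rule at_grid) (use True k assms(3,4) in auto)
    ultimately show ?thesis by (simp only:)
  qed (use assms(7) in \<open>simp add: hi_def\<close>)
  define p where "p = (1 + real k) * g (grid k) - real k * g (grid (k + 1))"
  define q where "q = 10 * (g (grid (k + 1)) - g (grid k))"
  have affine: "g y = p + q * y" if "grid k \<le> y" "y \<le> grid (k + 1)" for y
    using g k(1) that unfolding grid_affine_def p_def q_def by (auto simp: algebra_simps)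
  have "g lo = p + q * lo" "g hi = p + q * hi" "g x = p + q * x"
    using in_cell by (intro affine; linarith)+
  then show ?thesis
    using affine_nonneg_between[of p q lo hi x] lo_nonneg hi_nonneg in_cell by simp
qed

lemma grid_affine_sum_nonneg:
  assumes f: "grid_affine f" and g: "grid_affine g"
    and at_grid: "\<And>a b. a \<le> b \<Longrightarrow> b \<le> 10 \<Longrightarrow> 0 \<le> f (grid a) + g (grid b)"
    and diagonal: "\<And>s. 0 \<le> s \<Longrightarrow> s \<le> 1 \<Longrightarrow> 0 \<le> f s + g s"
    and "0 \<le> s1" "s1 \<le> s2" "s2 \<le> 1"
  shows "0 \<le> f s1 + g s2"
proof -
  have at_grid_right: "0 \<le> f s + g (grid b)" if "b \<le> 10" "0 \<le> s" "s \<le> grid b" for b s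
    using that
    by (intro grid_affine_nonneg_between[of "\<lambda>s. f s + g (grid b)" 0 s "grid b"]
        grid_affine_add f grid_affine_const at_grid[of 0 b, simplified] at_grid) auto
  show ?thesis
    using assms(5-7)
    by (intro grid_affine_nonneg_between[of "\<lambda>t. f s1 + g t" s1 s2 1]
        grid_affine_add grid_affine_const g diagonal at_grid_right[of 10, simplified] at_grid_right) auto
qed

definition grid_biaffine :: "(real \<Rightarrow> real \<Rightarrow> real) \<Rightarrow> bool" where
  "grid_biaffine Q \<longleftrightarrow> (\<forall>y. grid_affine (\<lambda>x. Q x y)) \<and> (\<forall>x. grid_affine (Q x))"

lemma grid_biaffine_BL: "grid_biaffine (BL Q)"
  unfolding grid_biaffine_def
proof (intro conjI allI)
  show "grid_affine (\<lambda>x. BL Q x y)" for y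
    unfolding BL_interp_outer_x by (rule grid_affine_interp)
  show "grid_affine (BL Q x)" for x
    unfolding BL_interp_outer_y[abs_def] by (rule grid_affine_interp)
qed

lemma grid_biaffine_mixed_vol_nonneg:
  assumes biaffine: "grid_biaffine F" "grid_biaffine G" "grid_biaffine H" "grid_biaffine K"
    and at_grid: "\<And>a b c d. a \<le> b \<Longrightarrow> b \<le> 10 \<Longrightarrow> c \<le> d \<Longrightarrow> d \<le> 10 \<Longrightarrow>
      0 \<le> F (grid a) (grid c) + G (grid b) (grid d) - H (grid b) (grid c) - K (grid a) (grid d)"
    and diagonal_s: "\<And>s t1 t2. 0 \<le> s \<Longrightarrow> s \<le> 1 \<Longrightarrow> 0 \<le> t1 \<Longrightarrow> t1 \<le> t2 \<Longrightarrow> t2 \<le> 1 \<Longrightarrow>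
      0 \<le> F s t1 + G s t2 - H s t1 - K s t2"
    and diagonal_t: "\<And>s1 s2 t. 0 \<le> s1 \<Longrightarrow> s1 \<le> s2 \<Longrightarrow> s2 \<le> 1 \<Longrightarrow> 0 \<le> t \<Longrightarrow> t \<le> 1 \<Longrightarrow>
      0 \<le> F s1 t + G s2 t - H s2 t - K s1 t"
    and s_range: "0 \<le> s1" "s1 \<le> s2" "s2 \<le> 1" and t_range: "0 \<le> t1" "t1 \<le> t2" "t2 \<le> 1"
  shows "0 \<le> F s1 t1 + G s2 t2 - H s2 t1 - K s1 t2"
proof -
  have affine_x: "grid_affine (\<lambda>x. Q x y)" and affine_y: "grid_affine (Q x)"
    if "grid_biaffine Q" for Q x y
    using that unfolding grid_biaffine_def by blast+
  have s_at_grid: "0 \<le> F (grid a) t1 + G (grid b) t2 - H (grid b) t1 - K (grid a) t2"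
    if "a \<le> b" "b \<le> 10" for a b
  proof -
    have "0 \<le> (F (grid a) t1 - H (grid b) t1) + (G (grid b) t2 - K (grid a) t2)"
    proof (rule grid_affine_sum_nonneg[OF _ _ _ _ t_range])
      show "grid_affine (\<lambda>t. F (grid a) t - H (grid b) t)"
        using biaffine by (intro grid_affine_diff affine_y)
      show "grid_affine (\<lambda>t. G (grid b) t - K (grid a) t)"
        using biaffine by (intro grid_affine_diff affine_y)
      show "0 \<le> F (grid a) (grid c) - H (grid b) (grid c) + (G (grid b) (grid d) - K (grid a) (grid d))"
        if "c \<le> d" "d \<le> 10" for c d
        using at_grid[of a b c d] \<open>a \<le> b\<close> \<open>b \<le> 10\<close> that by simp
      show "0 \<le> F (grid a) t - H (grid b) t + (G (grid b) t - K (grid a) t)"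
        if "0 \<le> t" "t \<le> 1" for t
        using diagonal_t[of "grid a" "grid b" t] \<open>a \<le> b\<close> \<open>b \<le> 10\<close> that by simp
    qed
    then show ?thesis by simp
  qed
  have "0 \<le> (F s1 t1 - K s1 t2) + (G s2 t2 - H s2 t1)"
  proof (rule grid_affine_sum_nonneg[OF _ _ _ _ s_range])
    show "grid_affine (\<lambda>s. F s t1 - K s t2)"
      using biaffine by (intro grid_affine_diff affine_x)
    show "grid_affine (\<lambda>s. G s t2 - H s t1)"
      using biaffine by (intro grid_affine_diff affine_x)
    show "0 \<le> F (grid a) t1 - K (grid a) t2 + (G (grid b) t2 - H (grid b) t1)"
      if "a \<le> b" "b \<le> 10" for a b
      using s_at_grid[OF that] by simp
    show "0 \<le> F s t1 - K s t2 + (G s t2 - H s t1)" if "0 \<le> s" "s \<le> 1" for s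
      using diagonal_s[OF that t_range] by simp
  qed
  then show ?thesis by simp
qed

lemma imprecise_copula_BL:
  assumes "disc_imprecise_copula A B"
  shows "imprecise_copula (BL A) (BL B)"
proof -
  have at_grid: "imprecise_ineqs A B (grid a) (grid b) (grid c) (grid d)"
    if "a \<le> b" "b \<le> 10" "c \<le> d" "d \<le> 10" for a b c d
    using assms that grid_in_mesh unfolding disc_imprecise_copula_def by simp
  have "A (grid k) (grid l) \<le> B (grid k) (grid l)" if "k \<le> 10" "l \<le> 10" for k l
    using at_grid[of k k l l] that unfolding imprecise_ineqs_def by simp
  then have BL_le: "BL A x y \<le> BL B x y" if "0 \<le> x" "x \<le> 1" "0 \<le> y" "y \<le> 1" for x y
    using that by (intro BL_mono)
  have BL_at_grid: "imprecise_ineqs (BL A) (BL B) (grid a) (grid b) (grid c) (grid d)"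
    if "a \<le> b" "b \<le> 10" "c \<le> d" "d \<le> 10" for a b c d
    using at_grid[OF that] that by (simp add: BL_grid imprecise_ineqs_def)
  have "imprecise_ineqs (BL A) (BL B) s1 s2 t1 t2"
    if "0 \<le> s1" "s1 \<le> s2" "s2 \<le> 1" "0 \<le> t1" "t1 \<le> t2" "t2 \<le> 1" for s1 s2 t1 t2
    unfolding imprecise_ineqs_def
  proof (intro conjI; rule grid_biaffine_mixed_vol_nonneg[OF grid_biaffine_BL grid_biaffine_BL
        grid_biaffine_BL grid_biaffine_BL _ _ _ that])
  qed (use BL_at_grid BL_le in \<open>auto simp: imprecise_ineqs_def\<close>)
  then show ?thesis
    using assms grounded_BL neutral_BL unfolding imprecise_copula_def disc_imprecise_copula_def
    by simp
qed

section \<open>No copula between \<open>\<langle>A\<rangle>\<close> and \<open>\<langle>B\<rangle>\<close>\<close>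

lemma Vol_square_minus_holes_nonneg:
  assumes Vol_nonneg: "\<And>a b c d. a \<le> b \<Longrightarrow> b \<le> 10 \<Longrightarrow> c \<le> d \<Longrightarrow> d \<le> 10 \<Longrightarrow>
      0 \<le> Vol C (grid a) (grid b) (grid c) (grid d)"
  shows "0 \<le> Vol C (grid 1) (grid 6) (grid 1) (grid 6)
              - Vol C (grid 2) (grid 3) (grid 2) (grid 4) - Vol C (grid 4) (grid 5) (grid 3) (grid 5)"
proof -
  \<comment> \<open>These seven rectangles tile the square minus the two holes.\<close>
  have "0 \<le> Vol C (grid 1) (grid 2) (grid 1) (grid 6)" "0 \<le> Vol C (grid 3) (grid 4) (grid 1) (grid 6)"
    "0 \<le> Vol C (grid 5) (grid 6) (grid 1) (grid 6)"
    "0 \<le> Vol C (grid 2) (grid 3) (grid 1) (grid 2)" "0 \<le> Vol C (grid 2) (grid 3) (grid 4) (grid 6)"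
    "0 \<le> Vol C (grid 4) (grid 5) (grid 1) (grid 3)" "0 \<le> Vol C (grid 4) (grid 5) (grid 5) (grid 6)"
    by (rule Vol_nonneg; simp)+
  then show ?thesis
    unfolding Vol_def by linarith
qed

lemma no_grid_copula_between_A_B:
  assumes Vol_nonneg: "\<And>a b c d. a \<le> b \<Longrightarrow> b \<le> 10 \<Longrightarrow> c \<le> d \<Longrightarrow> d \<le> 10 \<Longrightarrow>
      0 \<le> Vol C (grid a) (grid b) (grid c) (grid d)"
    and lower: "\<And>a b. a \<le> 10 \<Longrightarrow> b \<le> 10 \<Longrightarrow> A_mesh (grid a) (grid b) \<le> C (grid a) (grid b)"
    and upper: "\<And>a b. a \<le> 10 \<Longrightarrow> b \<le> 10 \<Longrightarrow> C (grid a) (grid b) \<le> B_mesh (grid a) (grid b)"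
  shows False
proof -
  note bounds = upper[of 1 1] upper[of 6 6] upper[of 3 2] upper[of 2 4] upper[of 5 3] upper[of 4 5]
    lower[of 6 1] lower[of 1 6] lower[of 2 2] lower[of 3 4] lower[of 4 3] lower[of 5 5]
  have "0 \<le> Vol C (grid 1) (grid 6) (grid 1) (grid 6)
              - Vol C (grid 2) (grid 3) (grid 2) (grid 4) - Vol C (grid 4) (grid 5) (grid 3) (grid 5)"
    using Vol_nonneg by (rule Vol_square_minus_holes_nonneg)
  then show False
    using bounds[unfolded A_mesh_def B_mesh_def mesh_fun_grid, simplified, simplified matA_def matB_def, simplified]
    unfolding Vol_def by simp
qed

lemma no_disc_copula_between_A_B:
  "\<not> (\<exists>C. disc_copula C \<and> (\<forall>x\<in>mesh. \<forall>y\<in>mesh. A_mesh x y \<le> C x y \<and> C x y \<le> B_mesh x y))"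
proof
  assume "\<exists>C. disc_copula C \<and> (\<forall>x\<in>mesh. \<forall>y\<in>mesh. A_mesh x y \<le> C x y \<and> C x y \<le> B_mesh x y)"
  then obtain C where "disc_copula C" "\<forall>x\<in>mesh. \<forall>y\<in>mesh. A_mesh x y \<le> C x y \<and> C x y \<le> B_mesh x y"
    by blast
  then show False
    by (intro no_grid_copula_between_A_B[of C]) (auto simp: disc_copula_def grid_in_mesh)
qed

lemma no_copula_between_BL_A_B:
  "\<not> (\<exists>C. copula C \<and> (\<forall>x\<in>{0..1}. \<forall>y\<in>{0..1}. BL A_mesh x y \<le> C x y \<and> C x y \<le> BL B_mesh x y))"
proof
  assume "\<exists>C. copula C \<and> (\<forall>x\<in>{0..1}. \<forall>y\<in>{0..1}. BL A_mesh x y \<le> C x y \<and> C x y \<le> BL B_mesh x y)"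
  then obtain C where "copula C"
    and between: "\<forall>x\<in>{0..1}. \<forall>y\<in>{0..1}. BL A_mesh x y \<le> C x y \<and> C x y \<le> BL B_mesh x y"
    by blast
  moreover have "A_mesh (grid a) (grid b) \<le> C (grid a) (grid b) \<and> C (grid a) (grid b) \<le> B_mesh (grid a) (grid b)"
    if "a \<le> 10" "b \<le> 10" for a b
    using between[rule_format, of "grid a" "grid b"] that by (simp add: BL_grid)
  ultimately show False
    by (intro no_grid_copula_between_A_B[of C]) (auto simp: copula_def)
qed

section \<open>The matrices \<open>[A]\<close> and \<open>[B]\<close>\<close>

lemma int_margins_matA: "int_margins matA"
  by code_simp

lemma int_margins_matB: "int_margins matB"
  by code_simp

lemma int_quasi_copula_matA: "int_quasi_copula matA"
  by code_simp

lemma int_imprecise_copula_matA_matB: "int_imprecise_copula matA matB"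
  by code_simp

lemma matB_eq_int_Q_M_matA: "\<forall>k\<in>set [0..<11]. \<forall>l\<in>set [0..<11]. matB ! k ! l = int_Q_M matA k l"
  by code_simp

lemma B_mesh_eq_Q_M_A_mesh: "\<forall>x\<in>mesh. \<forall>y\<in>mesh. B_mesh x y = Q_M A_mesh x y"
  using matB_eq_int_Q_M_matA
  unfolding ball_mesh A_mesh_def B_mesh_def by (simp add: Q_M_mesh_fun mesh_fun_grid)

lemma disc_quasi_copula_A: "disc_quasi_copula A_mesh"
  unfolding A_mesh_def using int_margins_matA int_quasi_copula_matA
  by (rule disc_quasi_copula_mesh_fun)

lemma disc_imprecise_copula_A_B: "disc_imprecise_copula A_mesh B_mesh"
  unfolding A_mesh_def B_mesh_def
  using int_margins_matA int_margins_matB int_imprecise_copula_matA_matB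
  by (rule disc_imprecise_copula_mesh_fun)

theorem mainTheorem17:
  shows "disc_quasi_copula A_mesh
    \<and> (\<forall>x\<in>mesh. \<forall>y\<in>mesh. B_mesh x y = Q_M A_mesh x y)
    \<and> disc_imprecise_copula A_mesh B_mesh
    \<and> \<not> (\<exists>C. disc_copula C \<and> (\<forall>x\<in>mesh. \<forall>y\<in>mesh. A_mesh x y \<le> C x y \<and> C x y \<le> B_mesh x y))
    \<and> imprecise_copula (BL A_mesh) (BL B_mesh)
    \<and> \<not> (\<exists>C. copula C \<and> (\<forall>x\<in>{0..1}. \<forall>y\<in>{0..1}. BL A_mesh x y \<le> C x y \<and> C x y \<le> BL B_mesh x y))"
  using disc_quasi_copula_A B_mesh_eq_Q_M_A_mesh disc_imprecise_copula_A_B no_disc_copula_between_A_B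
    imprecise_copula_BL[OF disc_imprecise_copula_A_B] no_copula_between_BL_A_B
  by blast

end
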